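(* Fix an integer $N \ge 1$. For every rate tuple $(R_1,\dots,R_N)$ with $R_n \ge 0$ and $R_1 + \cdots + R_N < 1$, there exist $\kappa_1,\dots,\kappa_N > 0$ such that the following holds. For positive integers $K_n = K_n(L)$ with $\lim_{L\to\infty} K_n/L = \kappa_n$, let $\underline{x}_1,\dots,\underline{x}_N$ be independent with $\underline{x}_n \sim \mathsf{BF}(L, K_n)$, and let $\underline{y} = \underline{x}_1 \vee \cdots \vee \underline{x}_N$ (componentwise OR). Then for every nonempty $\mathcal{S} \subseteq \{1,\dots,N\}$, with $\bar{\mathcal{S}} = \{1,\dots,N\}\setminus \mathcal{S}$, $$\sum_{n\in\mathcal{S}} R_n < \liminf_{L\to\infty} \frac{1}{L} I(\underline{x}_{\mathcal{S}}; \underline{y} \mid \underline{x}_{\bar{\mathcal{S}}}).$$ That is, Bloom filter channel inputs (with joint decoding) achieve every point of the capacity region $\{\underline{R}: R_1+\cdots+R_N \le 1\}$ of the $N$-user OR multiple-access channel (rates in bits per channel use).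
   Context: The $N$-user OR multiple-access channel has binary inputs $x_1,\dots,x_N \in \{0,1\}$ and output $y = x_1 \vee \cdots \vee x_N$ (Boolean OR), used memorylessly; its capacity region is $\{\underline{R} : R_1 + \cdots + R_N \le 1 \text{ bit per channel use}\}$. A Bloom filter $\mathsf{BF}(L, K)$ is the random binary array in $\{0,1\}^L$ obtained by starting from the all-zero array and letting $K$ hash functions each independently select a uniformly random position in $\{1,\dots,L\}$ and set it to $1$. A length-$L$ Bloom filter is used as a block of $L$ channel inputs; mutual information is in bits, $\underline{x}_{\mathcal{S}} = (\underline{x}_n)_{n\in\mathcal{S}}$, and conditioning on $\underline{x}_{\emptyset}$ is vacuous. *)

theory Defs
  imports "HOL-Probability.Probability"
begin

text \<open>Bloom filter BF(L,K): positions are 0..L-1; an array is a function nat => bool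
  (False outside 0..L-1). Start from all-zero, each of K hashes sets a uniformly
  random position (independently) to 1.\<close>
fun bloom_filter :: "nat \<Rightarrow> nat \<Rightarrow> (nat \<Rightarrow> bool) pmf" where
  "bloom_filter L 0 = return_pmf (\<lambda>i. False)"
| "bloom_filter L (Suc K) =
     bind_pmf (bloom_filter L K) (\<lambda>x. map_pmf (\<lambda>j. x(j := True)) (pmf_of_set {0..<L}))"

definition entropy_pmf :: "'a pmf \<Rightarrow> real" where
  "entropy_pmf p = - (\<Sum>x\<in>set_pmf p. pmf p x * log 2 (pmf p x))"

definition H_rv :: "'w pmf \<Rightarrow> ('w \<Rightarrow> 'a) \<Rightarrow> real" where
  "H_rv P f = entropy_pmf (map_pmf f P)"

definition cond_mutual_info :: "'w pmf \<Rightarrow> ('w \<Rightarrow> 'a) \<Rightarrow> ('w \<Rightarrow> 'b) \<Rightarrow> ('w \<Rightarrow> 'c) \<Rightarrow> real" where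
  "cond_mutual_info P A B C =
     H_rv P (\<lambda>w. (A w, C w)) + H_rv P (\<lambda>w. (B w, C w))
     - H_rv P (\<lambda>w. (A w, B w, C w)) - H_rv P C"

definition bf_inputs :: "nat \<Rightarrow> nat \<Rightarrow> (nat \<Rightarrow> nat \<Rightarrow> nat) \<Rightarrow> (nat \<Rightarrow> nat \<Rightarrow> bool) pmf" where
  "bf_inputs N L K = Pi_pmf {0..<N} (\<lambda>i. False) (\<lambda>n. bloom_filter L (K n L))"

definition or_output :: "nat \<Rightarrow> (nat \<Rightarrow> nat \<Rightarrow> bool) \<Rightarrow> nat \<Rightarrow> bool" where
  "or_output N x = (\<lambda>i. \<exists>n<N. x n i)"

end

theory Submission
  imports Defs "HOL-Combinatorics.Permutations" "HOL-Real_Asymp.Real_Asymp"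
begin

text \<open>
  Take \<open>\<kappa> n = ln 2 * (R n + \<delta>)\<close> with \<open>(\<Sum>n<N. \<kappa> n) = ln 2\<close>. A fixed position is then zero
  in all inputs with probability tending to \<open>1/2\<close>, and zero in all inputs outside \<open>S\<close> with
  probability tending to \<open>\<alpha> = 2 powr (\<beta> - 1)\<close>, where \<open>\<beta> = (\<Sum>n\<in>S. \<kappa> n) / ln 2\<close> exceeds
  \<open>\<Sum>n\<in>S. R n\<close>. As the output is a function of all inputs, the information equals the
  conditional entropy of the output given the inputs outside \<open>S\<close>. Permuting, inside the inputs
  of \<open>S\<close>, the \<open>V\<close> positions where all inputs outside \<open>S\<close> vanish preserves the joint
  distribution, so given those inputs each of the \<open>V choose U\<close> outputs with the observed
  number \<open>U\<close> of zeros is equally likely, and the information is at least the expectation of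
  \<open>log 2 (V choose U)\<close>. By Chebyshev's inequality \<open>V / L\<close> and \<open>U / L\<close> concentrate at
  \<open>\<alpha>\<close> and \<open>1/2\<close>; since \<open>log 2 (V choose U) \<ge> V * h (U / V) - log 2 (V + 1)\<close> for the binary
  entropy \<open>h\<close>, the \<open>liminf\<close> of the normalised information is at least
  \<open>\<alpha> * h (1 / (2 * \<alpha>)) \<ge> \<beta>\<close>.
\<close>

section \<open>Bloom filter inputs\<close>

lemma set_pmf_bloom_filter_beyond:
  assumes "0 < L" "x \<in> set_pmf (bloom_filter L k)" "L \<le> i"
  shows "\<not> x i"
  using assms(2)
proof (induction k arbitrary: x)
  case (Suc k)
  then obtain y j where "y \<in> set_pmf (bloom_filter L k)" "j < L" "x = y(j := True)"
    using assms(1) by (auto simp: set_bind_pmf)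
  with Suc.IH assms(3) show ?case by auto
qed simp

lemma finite_set_pmf_bloom_filter:
  assumes "0 < L"
  shows "finite (set_pmf (bloom_filter L k))"
  by (induction k) (use assms in \<open>auto simp: set_bind_pmf\<close>)

lemma prob_bloom_filter_avoid:
  assumes "0 < L" "D \<subseteq> {0..<L}"
  shows "measure_pmf.prob (bloom_filter L k) {x. \<forall>i\<in>D. \<not> x i} = ((real L - card D) / L) ^ k"
proof (induction k)
  case (Suc k)
  define E where "E = {x::nat \<Rightarrow> bool. \<forall>i\<in>D. \<not> x i}"
  have "card D \<le> L"
    using card_mono[OF _ assms(2)] by simp
  then have hit: "measure_pmf.prob (pmf_of_set {0..<L}) (- D) = (real L - card D) / L"
    using assms by (simp add: measure_pmf_of_set Diff_eq[symmetric] card_Diff_subset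
        finite_subset of_nat_diff)
  have "emeasure (bloom_filter L (Suc k)) E
      = (\<integral>\<^sup>+x. emeasure (pmf_of_set {0..<L}) ((\<lambda>j. x(j := True)) -` E) \<partial>bloom_filter L k)"
    by simp
  also have "\<dots> = (\<integral>\<^sup>+x. ennreal ((real L - card D) / L) * indicator E x \<partial>bloom_filter L k)"
  proof (rule nn_integral_cong)
    fix x
    have "(\<lambda>j. x(j := True)) -` E = (if x \<in> E then - D else {})"
      by (auto simp: E_def)
    then show "emeasure (pmf_of_set {0..<L}) ((\<lambda>j. x(j := True)) -` E)
             = ennreal ((real L - card D) / L) * indicator E x"
      by (simp add: measure_pmf.emeasure_eq_measure hit)
  qed
  also have "\<dots> = ennreal (((real L - card D) / L) ^ Suc k)"
    using Suc \<open>card D \<le> L\<close>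
    by (simp add: nn_integral_cmult_indicator measure_pmf.emeasure_eq_measure E_def
        ennreal_mult[symmetric] mult.commute)
  finally show ?case
    using \<open>card D \<le> L\<close> by (simp add: measure_pmf.emeasure_eq_measure E_def)
qed simp

lemma map_pmf_bloom_filter_permute:
  assumes "0 < L" "\<sigma> permutes {0..<L}"
  shows "map_pmf (\<lambda>x. x \<circ> \<sigma>) (bloom_filter L k) = bloom_filter L k"
proof (induction k)
  case (Suc k)
  have uniform: "map_pmf (inv \<sigma>) (pmf_of_set {0..<L}) = pmf_of_set {0..<L}"
    using assms permutes_inv[OF assms(2)]
    by (simp add: map_pmf_of_set_inj permutes_image permutes_inj_on)
  have "(x(j := True)) \<circ> \<sigma> = (x \<circ> \<sigma>)(inv \<sigma> j := True)" for x :: "nat \<Rightarrow> bool" and j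
    using permutes_inverses[OF assms(2)] by (auto simp: fun_eq_iff)
  then have "map_pmf (\<lambda>x. x \<circ> \<sigma>) (bloom_filter L (Suc k))
      = bind_pmf (bloom_filter L k)
          (\<lambda>x. map_pmf (\<lambda>j. (x \<circ> \<sigma>)(j := True)) (map_pmf (inv \<sigma>) (pmf_of_set {0..<L})))"
    by (simp add: map_bind_pmf pmf.map_comp o_def)
  also have "\<dots> = bind_pmf (map_pmf (\<lambda>x. x \<circ> \<sigma>) (bloom_filter L k))
                    (\<lambda>y. map_pmf (\<lambda>j. y(j := True)) (pmf_of_set {0..<L}))"
    by (simp add: uniform bind_map_pmf)
  also have "\<dots> = bloom_filter L (Suc k)"
    by (simp only: Suc bloom_filter.simps)
  finally show ?case .
qed (simp add: o_def)

lemma Pi_pmf_map_dependent: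
  assumes "finite A"
  shows "Pi_pmf A dflt (\<lambda>a. map_pmf (f a) (p a))
       = map_pmf (\<lambda>h a. if a \<in> A then f a (h a) else dflt) (Pi_pmf A dflt p)"
proof -
  have "Pi_pmf A dflt (\<lambda>a. map_pmf (f a) (p a))
      = Pi_pmf A dflt (\<lambda>a. bind_pmf (p a) (\<lambda>y. return_pmf (f a y)))"
    by (simp add: map_pmf_def)
  also have "\<dots> = bind_pmf (Pi_pmf A dflt p) (\<lambda>h. Pi_pmf A dflt (\<lambda>a. return_pmf (f a (h a))))"
    using assms by (rule Pi_pmf_bind)
  finally show ?thesis
    using assms by (simp add: map_pmf_def)
qed

lemma set_pmf_bf_inputs_beyond:
  assumes "0 < L" "x \<in> set_pmf (bf_inputs N L K)" "L \<le> i"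
  shows "\<not> x n i"
  using assms set_pmf_bloom_filter_beyond[OF assms(1) _ assms(3)]
  by (cases "n < N") (auto simp: bf_inputs_def set_Pi_pmf PiE_dflt_def)

lemma finite_set_pmf_bf_inputs:
  assumes "0 < L"
  shows "finite (set_pmf (bf_inputs N L K))"
  using finite_set_pmf_bloom_filter[OF assms]
  by (auto simp: bf_inputs_def set_Pi_pmf)

lemma prob_bf_inputs_avoid:
  assumes "0 < L" "D \<subseteq> {0..<L}" "M \<subseteq> {..<N}"
  shows "measure_pmf.prob (bf_inputs N L K) {x. \<forall>n\<in>M. \<forall>i\<in>D. \<not> x n i}
       = (\<Prod>n\<in>M. ((real L - card D) / L) ^ K n L)"
proof -
  define B where "B n = (if n \<in> M then {y. \<forall>i\<in>D. \<not> y i} else UNIV)" for n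
  have "{x. \<forall>n\<in>M. \<forall>i\<in>D. \<not> x n i} = Pi {0..<N} B"
    using assms(3) by (auto simp: Pi_def B_def)
  then have "measure_pmf.prob (bf_inputs N L K) {x. \<forall>n\<in>M. \<forall>i\<in>D. \<not> x n i}
      = (\<Prod>n\<in>{0..<N}. measure_pmf.prob (bloom_filter L (K n L)) (B n))"
    by (simp add: bf_inputs_def measure_Pi_pmf_Pi)
  also have "\<dots> = (\<Prod>n\<in>{0..<N} \<inter> M. ((real L - card D) / L) ^ K n L)"
    by (simp add: B_def prob_bloom_filter_avoid[OF assms(1,2)] prod.inter_restrict if_distrib
        cong: if_cong)
  also have "{0..<N} \<inter> M = M"
    using assms(3) by auto
  finally show ?thesis .
qed

lemma map_pmf_bf_inputs_permute:
  assumes "0 < L" "\<sigma> permutes {0..<L}"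
  shows "map_pmf (\<lambda>x n. if n \<in> S then x n \<circ> \<sigma> else x n) (bf_inputs N L K) = bf_inputs N L K"
proof -
  define f :: "nat \<Rightarrow> (nat \<Rightarrow> bool) \<Rightarrow> nat \<Rightarrow> bool"
    where "f n = (if n \<in> S then (\<lambda>y. y \<circ> \<sigma>) else id)" for n
  have "map_pmf (\<lambda>x n. if n \<in> S then x n \<circ> \<sigma> else x n) (bf_inputs N L K)
      = map_pmf (\<lambda>x n. if n \<in> {0..<N} then f n (x n) else (\<lambda>i. False)) (bf_inputs N L K)"
    by (intro map_pmf_cong refl)
      (auto simp: f_def fun_eq_iff bf_inputs_def set_Pi_pmf PiE_dflt_def)
  also have "\<dots> = Pi_pmf {0..<N} (\<lambda>i. False) (\<lambda>n. map_pmf (f n) (bloom_filter L (K n L)))"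
    unfolding bf_inputs_def by (rule Pi_pmf_map_dependent[symmetric]) simp
  also have "\<dots> = bf_inputs N L K"
  proof -
    have "map_pmf (f n) (bloom_filter L k) = bloom_filter L k" for n k
      by (cases "n \<in> S") (simp_all add: f_def map_pmf_bloom_filter_permute[OF assms])
    then show ?thesis
      by (simp add: bf_inputs_def)
  qed
  finally show ?thesis .
qed

section \<open>Exchangeability of the output\<close>

lemma exists_permutes_image:
  assumes "finite V" "U \<subseteq> V" "U' \<subseteq> V" "card U = card U'"
  obtains \<sigma> where "\<sigma> permutes V" "\<sigma> ` U = U'"
proof -
  have "finite U" "finite U'"
    using finite_subset[OF assms(2,1)] finite_subset[OF assms(3,1)] .
  then obtain g where g: "bij_betw g U U'"
    using finite_same_card_bij assms(4) by metis
  have "card (V - U) = card (V - U')"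
    using assms \<open>finite U\<close> \<open>finite U'\<close> by (simp add: card_Diff_subset)
  then obtain h where h: "bij_betw h (V - U) (V - U')"
    using finite_same_card_bij finite_Diff assms(1) by metis
  define \<sigma> where "\<sigma> x = (if x \<in> V then if x \<in> U then g x else h x else x)" for x
  have "bij_betw (\<lambda>x. if x \<in> U then g x else h x) (U \<union> (V - U)) (U' \<union> (V - U'))"
    by (rule bij_betw_disjoint_Un[OF g h]) auto
  moreover have "U \<union> (V - U) = V" "U' \<union> (V - U') = V"
    using assms(2,3) by auto
  moreover have "bij_betw \<sigma> V V = bij_betw (\<lambda>x. if x \<in> U then g x else h x) V V"
    by (rule bij_betw_cong) (simp add: \<sigma>_def)
  ultimately have "bij_betw \<sigma> V V"
    by simp
  then have "\<sigma> permutes V"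
    by (rule bij_imp_permutes) (simp add: \<sigma>_def)
  moreover have "\<sigma> ` U = g ` U"
    using assms(2) by (intro image_cong) (auto simp: \<sigma>_def)
  with g have "\<sigma> ` U = U'"
    by (simp add: bij_betw_def)
  ultimately show thesis
    by (rule that)
qed

definition zero_positions :: "nat \<Rightarrow> nat set \<Rightarrow> (nat \<Rightarrow> nat \<Rightarrow> bool) \<Rightarrow> nat set" where
  "zero_positions L M x = {i \<in> {0..<L}. \<forall>n\<in>M. \<not> x n i}"

lemma zero_positions_antimono:
  "M \<subseteq> M' \<Longrightarrow> zero_positions L M' x \<subseteq> zero_positions L M x"
  by (auto simp: zero_positions_def)

lemma card_zero_positions_le: "card (zero_positions L M x) \<le> L"
proof -
  have "card (zero_positions L M x) \<le> card {0..<L}"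
    by (rule card_mono) (auto simp: zero_positions_def)
  then show ?thesis
    by simp
qed

lemma or_output_bf_inputs:
  assumes "0 < L" "x \<in> set_pmf (bf_inputs N L K)"
  shows "or_output N x = (\<lambda>i. i \<in> {0..<L} - zero_positions L {..<N} x)"
proof
  fix i
  show "or_output N x i = (i \<in> {0..<L} - zero_positions L {..<N} x)"
    using set_pmf_bf_inputs_beyond[OF assms, of i]
    by (cases "i < L") (auto simp: or_output_def zero_positions_def)
qed

lemma prob_cond_or_output_permute:
  assumes "0 < L" "\<sigma> permutes zero_positions L M x0"
  shows "measure_pmf.prob (bf_inputs N L K)
           {w. restrict w M = restrict x0 M \<and> or_output N w \<circ> \<sigma> = y}
       = measure_pmf.prob (bf_inputs N L K)
           {w. restrict w M = restrict x0 M \<and> or_output N w = y}"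
proof -
  define \<Phi> where "\<Phi> w n = (if n \<in> - M then w n \<circ> \<sigma> else w n)" for w :: "nat \<Rightarrow> nat \<Rightarrow> bool" and n
  have "zero_positions L M x0 \<subseteq> {0..<L}"
    by (auto simp: zero_positions_def)
  then have "\<sigma> permutes {0..<L}"
    by (rule permutes_subset[OF assms(2)])
  then have invariant: "map_pmf \<Phi> (bf_inputs N L K) = bf_inputs N L K"
    unfolding \<Phi>_def by (rule map_pmf_bf_inputs_permute[OF assms(1)])
  have x0_invariant: "x0 n \<circ> \<sigma> = x0 n" if "n \<in> M" for n
  proof
    fix i
    show "(x0 n \<circ> \<sigma>) i = x0 n i"
    proof (cases "i \<in> zero_positions L M x0")
      case True
      then have "\<sigma> i \<in> zero_positions L M x0"
        by (simp add: permutes_in_image[OF assms(2)])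
      with True that show ?thesis
        by (simp add: zero_positions_def)
    qed (simp add: permutes_not_in[OF assms(2)])
  qed
  have "\<Phi> w n = w n \<circ> \<sigma>" if "restrict w M = restrict x0 M" for w n
  proof (cases "n \<in> M")
    case True
    then have "w n = x0 n"
      using fun_cong[OF that, of n] by simp
    with True show ?thesis
      by (simp add: \<Phi>_def x0_invariant)
  qed (simp add: \<Phi>_def)
  then have "or_output N (\<Phi> w) = or_output N w \<circ> \<sigma>" if "restrict w M = restrict x0 M" for w
    using that by (simp add: or_output_def fun_eq_iff)
  moreover have "restrict (\<Phi> w) M = restrict w M" for w
    by (simp add: \<Phi>_def restrict_def fun_eq_iff)
  ultimately have preimage: "\<Phi> -` {w. restrict w M = restrict x0 M \<and> or_output N w = y}
      = {w. restrict w M = restrict x0 M \<and> or_output N w \<circ> \<sigma> = y}"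
    by auto
  have "measure_pmf.prob (bf_inputs N L K) {w. restrict w M = restrict x0 M \<and> or_output N w = y}
      = measure_pmf.prob (map_pmf \<Phi> (bf_inputs N L K))
          {w. restrict w M = restrict x0 M \<and> or_output N w = y}"
    by (simp only: invariant)
  also have "\<dots> = measure_pmf.prob (bf_inputs N L K)
                    {w. restrict w M = restrict x0 M \<and> or_output N w \<circ> \<sigma> = y}"
    by (simp only: measure_map_pmf preimage)
  finally show ?thesis ..
qed

lemma prob_cond_or_output_swap_zeros:
  assumes "0 < L" "U \<subseteq> zero_positions L M x0" "U' \<subseteq> zero_positions L M x0" "card U = card U'"
  shows "measure_pmf.prob (bf_inputs N L K)
           {w. restrict w M = restrict x0 M \<and> or_output N w = (\<lambda>i. i \<in> {0..<L} - U)}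
       = measure_pmf.prob (bf_inputs N L K)
           {w. restrict w M = restrict x0 M \<and> or_output N w = (\<lambda>i. i \<in> {0..<L} - U')}"
proof -
  define V0 where "V0 = zero_positions L M x0"
  have "V0 \<subseteq> {0..<L}"
    by (auto simp: V0_def zero_positions_def)
  then have "finite V0"
    using finite_subset by blast
  then obtain \<sigma> where \<sigma>: "\<sigma> permutes V0" "\<sigma> ` U' = U"
    using exists_permutes_image assms(2-4) unfolding V0_def by metis
  have "\<sigma> permutes {0..<L}"
    using permutes_subset[OF \<sigma>(1) \<open>V0 \<subseteq> {0..<L}\<close>] .
  then have "\<sigma> i < L \<longleftrightarrow> i < L" for i
    using permutes_in_image by fastforce
  moreover have "\<sigma> i \<in> U \<longleftrightarrow> i \<in> U'" for i
    using \<sigma>(2) inj_image_mem_iff[OF permutes_inj[OF \<sigma>(1)]] by blast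
  ultimately have "(\<lambda>i. i \<in> {0..<L} - U) \<circ> \<sigma> = (\<lambda>i. i \<in> {0..<L} - U')"
    by (simp add: fun_eq_iff)
  moreover have "surj \<sigma>"
    using permutes_surj[OF \<sigma>(1)] .
  ultimately have "(or_output N w \<circ> \<sigma> = (\<lambda>i. i \<in> {0..<L} - U'))
      = (or_output N w = (\<lambda>i. i \<in> {0..<L} - U))" for w
    by (metis fun.map_comp surj_iff o_id)
  then have "{w. restrict w M = restrict x0 M \<and> or_output N w = (\<lambda>i. i \<in> {0..<L} - U)}
      = {w. restrict w M = restrict x0 M \<and> or_output N w \<circ> \<sigma> = (\<lambda>i. i \<in> {0..<L} - U')}"
    by blast
  then show ?thesis
    using prob_cond_or_output_permute[OF assms(1) \<sigma>(1)[unfolded V0_def]] by simp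
qed

lemma pmf_cond_or_output_mult_choose_le:
  assumes "0 < L" "M \<subseteq> {..<N}" "x0 \<in> set_pmf (bf_inputs N L K)"
  shows "pmf (map_pmf (\<lambda>w. (or_output N w, restrict w M)) (bf_inputs N L K))
             (or_output N x0, restrict x0 M)
         * real (card (zero_positions L M x0) choose card (zero_positions L {..<N} x0))
       \<le> pmf (map_pmf (\<lambda>w. restrict w M) (bf_inputs N L K)) (restrict x0 M)"
proof -
  define P where "P = bf_inputs N L K"
  define V0 where "V0 = zero_positions L M x0"
  define U0 where "U0 = zero_positions L {..<N} x0"
  define E where "E U = {w. restrict w M = restrict x0 M \<and> or_output N w = (\<lambda>i. i \<in> {0..<L} - U)}"
    for U
  define Us where "Us = {U. U \<subseteq> V0 \<and> card U = card U0}"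
  have V0_sub: "V0 \<subseteq> {0..<L}" and U0_sub: "U0 \<subseteq> V0"
    using assms(2) by (auto simp: V0_def U0_def zero_positions_def)
  have "finite V0"
    using V0_sub finite_subset by blast
  have same_prob: "measure_pmf.prob P (E U) = measure_pmf.prob P (E U0)" if "U \<in> Us" for U
    using that U0_sub unfolding P_def E_def Us_def V0_def
    by (intro prob_cond_or_output_swap_zeros[OF assms(1)]) auto
  have "disjoint_family_on E Us"
    unfolding disjoint_family_on_def
  proof (intro ballI impI)
    fix U U' assume "U \<in> Us" "U' \<in> Us" "U \<noteq> U'"
    moreover have "U = {i \<in> {0..<L}. \<not> (i \<in> {0..<L} - U)}" if "U \<in> Us" for U
      using that V0_sub by (auto simp: Us_def)
    ultimately have "(\<lambda>i. i \<in> {0..<L} - U) \<noteq> (\<lambda>i. i \<in> {0..<L} - U')"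
      by metis
    then show "E U \<inter> E U' = {}"
      by (auto simp: E_def)
  qed
  have "(\<lambda>w. (or_output N w, restrict w M)) -` {(or_output N x0, restrict x0 M)} = E U0"
    using or_output_bf_inputs[OF assms(1,3)] by (auto simp: E_def U0_def)
  moreover have "card Us = card V0 choose card U0"
    unfolding Us_def by (rule n_subsets[OF \<open>finite V0\<close>])
  ultimately have "pmf (map_pmf (\<lambda>w. (or_output N w, restrict w M)) P) (or_output N x0, restrict x0 M)
        * real (card V0 choose card U0) = real (card Us) * measure_pmf.prob P (E U0)"
    by (simp add: pmf_map)
  also have "\<dots> = (\<Sum>U\<in>Us. measure_pmf.prob P (E U))"
    by (simp add: same_prob)
  also have "\<dots> = measure_pmf.prob P (\<Union>U\<in>Us. E U)"
    using \<open>finite V0\<close> \<open>disjoint_family_on E Us\<close>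
    by (intro measure_pmf.finite_measure_finite_Union[symmetric]) (auto simp: Us_def)
  also have "\<dots> \<le> measure_pmf.prob P {w. restrict w M = restrict x0 M}"
    by (rule measure_pmf.finite_measure_mono) (auto simp: E_def)
  also have "\<dots> = pmf (map_pmf (\<lambda>w. restrict w M) P) (restrict x0 M)"
    by (simp add: pmf_map vimage_def)
  finally show ?thesis
    by (simp only: P_def V0_def U0_def)
qed

section \<open>Information as conditional entropy\<close>

lemma entropy_pmf_eq_expectation:
  assumes "finite (set_pmf p)"
  shows "entropy_pmf p = - measure_pmf.expectation p (\<lambda>y. log 2 (pmf p y))"
  using assms by (simp add: entropy_pmf_def integral_measure_pmf_real mult.commute)

lemma H_rv_eq_expectation:
  assumes "finite (set_pmf P)"
  shows "H_rv P f = - measure_pmf.expectation P (\<lambda>x. log 2 (pmf (map_pmf f P) (f x)))"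
  using assms by (simp add: H_rv_def entropy_pmf_eq_expectation)

lemma pmf_map_eq_if_same_fibres:
  assumes "\<And>x'. x' \<in> set_pmf P \<Longrightarrow> f x' = f x \<longleftrightarrow> g x' = g x"
  shows "pmf (map_pmf f P) (f x) = pmf (map_pmf g P) (g x)"
proof -
  have "f -` {f x} \<inter> set_pmf P = g -` {g x} \<inter> set_pmf P"
    using assms by auto
  then show ?thesis
    by (metis pmf_map measure_Int_set_pmf)
qed

text \<open>If \<open>B\<close> is a function of \<open>A\<close> and \<open>C\<close>, then \<open>I(A;B|C) = H(B|C)\<close>, the expectation of
  \<open>log (p(C) / p(B,C))\<close>; so any pointwise lower bound on this ratio bounds the information.\<close>

lemma cond_mutual_info_ge_expectation:
  assumes fin: "finite (set_pmf P)"
    and determined: "\<And>x x'. x \<in> set_pmf P \<Longrightarrow> x' \<in> set_pmf P \<Longrightarrow> A x = A x' \<Longrightarrow> C x = C x'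
                       \<Longrightarrow> B x = B x'"
    and pos: "\<And>x. x \<in> set_pmf P \<Longrightarrow> 0 < c x"
    and bound: "\<And>x. x \<in> set_pmf P \<Longrightarrow>
                  pmf (map_pmf (\<lambda>w. (B w, C w)) P) (B x, C x) * c x \<le> pmf (map_pmf C P) (C x)"
  shows "measure_pmf.expectation P (\<lambda>x. log 2 (c x)) \<le> cond_mutual_info P A B C"
proof -
  define pBC where "pBC x = pmf (map_pmf (\<lambda>w. (B w, C w)) P) (B x, C x)" for x
  define pC where "pC x = pmf (map_pmf C P) (C x)" for x
  have integrable: "integrable P f" for f :: "_ \<Rightarrow> real"
    using fin by (rule integrable_measure_pmf_finite)
  have "pmf (map_pmf (\<lambda>w. (A w, C w)) P) (A x, C x)
      = pmf (map_pmf (\<lambda>w. (A w, B w, C w)) P) (A x, B x, C x)" if "x \<in> set_pmf P" for x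
    by (rule pmf_map_eq_if_same_fibres) (use determined[OF that] in auto)
  then have "measure_pmf.expectation P (\<lambda>x. log 2 (pmf (map_pmf (\<lambda>w. (A w, C w)) P) (A x, C x)))
      = measure_pmf.expectation P
          (\<lambda>x. log 2 (pmf (map_pmf (\<lambda>w. (A w, B w, C w)) P) (A x, B x, C x)))"
    by (intro integral_cong_AE AE_pmfI) simp_all
  then have "cond_mutual_info P A B C
      = measure_pmf.expectation P (\<lambda>x. log 2 (pC x)) - measure_pmf.expectation P (\<lambda>x. log 2 (pBC x))"
    by (simp add: cond_mutual_info_def H_rv_eq_expectation[OF fin] pBC_def pC_def)
  also have "\<dots> = measure_pmf.expectation P (\<lambda>x. log 2 (pC x) - log 2 (pBC x))"
    by (simp add: integrable Bochner_Integration.integral_diff)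
  also have "measure_pmf.expectation P (\<lambda>x. log 2 (c x)) \<le> \<dots>"
  proof (rule integral_mono_AE[OF integrable integrable AE_pmfI])
    fix x assume x: "x \<in> set_pmf P"
    have "0 < pBC x" "0 < pC x"
      using x by (simp_all add: pBC_def pC_def pmf_positive set_map_pmf)
    then have "c x \<le> pC x / pBC x"
      using bound[OF x] by (simp add: pBC_def pC_def field_simps)
    then have "log 2 (c x) \<le> log 2 (pC x / pBC x)"
      using pos[OF x] \<open>0 < pBC x\<close> \<open>0 < pC x\<close> by simp
    then show "log 2 (c x) \<le> log 2 (pC x) - log 2 (pBC x)"
      using \<open>0 < pBC x\<close> \<open>0 < pC x\<close> by (simp add: log_divide)
  qed
  finally show ?thesis .
qed

lemma cond_mutual_info_bf_inputs_ge:
  assumes "0 < L" "S \<subseteq> {..<N}"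
  shows "measure_pmf.expectation (bf_inputs N L K)
           (\<lambda>x. log 2 (card (zero_positions L ({..<N} - S) x) choose card (zero_positions L {..<N} x)))
       \<le> cond_mutual_info (bf_inputs N L K) (\<lambda>x. restrict x S) (\<lambda>x. or_output N x)
           (\<lambda>x. restrict x ({..<N} - S))"
proof (rule cond_mutual_info_ge_expectation[OF finite_set_pmf_bf_inputs[OF assms(1)]])
  fix x x' :: "nat \<Rightarrow> nat \<Rightarrow> bool"
  assume on_S: "restrict x S = restrict x' S"
    and off_S: "restrict x ({..<N} - S) = restrict x' ({..<N} - S)"
  have "x n = x' n" if "n < N" for n
    using fun_cong[OF on_S, of n] fun_cong[OF off_S, of n] that
    by (cases "n \<in> S") auto
  then show "or_output N x = or_output N x'"
    by (auto simp: or_output_def fun_eq_iff)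
next
  fix x
  have "zero_positions L {..<N} x \<subseteq> zero_positions L ({..<N} - S) x"
    by (rule zero_positions_antimono) blast
  then have "card (zero_positions L {..<N} x) \<le> card (zero_positions L ({..<N} - S) x)"
    by (rule card_mono[rotated]) (simp add: zero_positions_def)
  then show "0 < real (card (zero_positions L ({..<N} - S) x) choose card (zero_positions L {..<N} x))"
    by simp
next
  fix x assume "x \<in> set_pmf (bf_inputs N L K)"
  then show "pmf (map_pmf (\<lambda>w. (or_output N w, restrict w ({..<N} - S))) (bf_inputs N L K))
          (or_output N x, restrict x ({..<N} - S))
        * real (card (zero_positions L ({..<N} - S) x) choose card (zero_positions L {..<N} x))
      \<le> pmf (map_pmf (\<lambda>w. restrict w ({..<N} - S)) (bf_inputs N L K)) (restrict x ({..<N} - S))"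
    by (rule pmf_cond_or_output_mult_choose_le[OF assms(1) Diff_subset])
qed

section \<open>Concentration of the zero positions\<close>

definition zero_prob :: "nat \<Rightarrow> (nat \<Rightarrow> nat \<Rightarrow> nat) \<Rightarrow> nat set \<Rightarrow> real" where
  "zero_prob L K M = (\<Prod>n\<in>M. ((real L - 1) / L) ^ K n L)"

lemma zero_prob_bounds: "0 < L \<Longrightarrow> 0 \<le> zero_prob L K M \<and> zero_prob L K M \<le> 1"
  unfolding zero_prob_def by (auto intro!: prod_nonneg prod_le_1 power_le_one)

lemma card_zero_positions_eq_sum:
  "real (card (zero_positions L M x)) = (\<Sum>i\<in>{0..<L}. indicator {x. \<forall>n\<in>M. \<not> x n i} x)"
  by (simp add: zero_positions_def indicator_def sum.If_cases Int_def)

lemma expectation_card_zero_positions: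
  assumes "0 < L" "M \<subseteq> {..<N}"
  shows "measure_pmf.expectation (bf_inputs N L K) (\<lambda>x. real (card (zero_positions L M x)))
       = L * zero_prob L K M"
proof -
  have "measure_pmf.expectation (bf_inputs N L K) (\<lambda>x. real (card (zero_positions L M x)))
      = (\<Sum>i\<in>{0..<L}. measure_pmf.prob (bf_inputs N L K) {x. \<forall>n\<in>M. \<not> x n i})"
    unfolding card_zero_positions_eq_sum
    by (simp add: Bochner_Integration.integral_sum integrable_measure_pmf_finite
        finite_set_pmf_bf_inputs[OF assms(1)])
  also have "\<dots> = (\<Sum>i\<in>{0..<L}. zero_prob L K M)"
  proof (rule sum.cong[OF refl])
    fix i assume "i \<in> {0..<L}"
    then show "measure_pmf.prob (bf_inputs N L K) {x. \<forall>n\<in>M. \<not> x n i} = zero_prob L K M"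
      using prob_bf_inputs_avoid[OF assms(1) _ assms(2), of "{i}" K] by (simp add: zero_prob_def)
  qed
  also have "\<dots> = L * zero_prob L K M"
    by simp
  finally show ?thesis .
qed

lemma prob_bf_inputs_avoid_pair_le:
  assumes "0 < L" "M \<subseteq> {..<N}" "i < L" "j < L"
  shows "measure_pmf.prob (bf_inputs N L K) {x. \<forall>n\<in>M. \<forall>k\<in>{i, j}. \<not> x n k}
       \<le> (if i = j then zero_prob L K M else (zero_prob L K M)\<^sup>2)"
proof -
  have prob: "measure_pmf.prob (bf_inputs N L K) {x. \<forall>n\<in>M. \<forall>k\<in>{i, j}. \<not> x n k}
      = (\<Prod>n\<in>M. ((real L - card {i, j}) / L) ^ K n L)"
    by (rule prob_bf_inputs_avoid[OF assms(1) _ assms(2)]) (use assms in auto)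
  show ?thesis
  proof (cases "i = j")
    case False
    have "(real L - 2) / L \<le> ((real L - 1) / L)\<^sup>2" "0 \<le> (real L - 2) / L"
      using assms False by (auto simp: field_simps power2_eq_square)
    then have "(\<Prod>n\<in>M. ((real L - 2) / L) ^ K n L) \<le> (\<Prod>n\<in>M. (((real L - 1) / L)\<^sup>2) ^ K n L)"
      by (intro prod_mono conjI power_mono zero_le_power)
    with False show ?thesis
      unfolding prob by (simp add: zero_prob_def prod_power_distrib power_mult[symmetric] mult.commute)
  next
    case True
    then show ?thesis
      unfolding prob by (simp add: zero_prob_def)
  qed
qed

lemma expectation_card_zero_positions_squared_le:
  assumes "0 < L" "M \<subseteq> {..<N}"
  shows "measure_pmf.expectation (bf_inputs N L K) (\<lambda>x. (real (card (zero_positions L M x)))\<^sup>2)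
       \<le> L * zero_prob L K M + (L * zero_prob L K M)\<^sup>2"
proof -
  define q where "q = zero_prob L K M"
  define Z where "Z i j = {x. \<forall>n\<in>M. \<forall>k\<in>{i, j}. \<not> x n k}" for i j :: nat
  have "(real (card (zero_positions L M x)))\<^sup>2 = (\<Sum>i\<in>{0..<L}. \<Sum>j\<in>{0..<L}. indicator (Z i j) x)"
    for x
    unfolding card_zero_positions_eq_sum power2_eq_square sum_product
    by (intro sum.cong refl) (auto simp: Z_def indicator_def)
  then have "measure_pmf.expectation (bf_inputs N L K) (\<lambda>x. (real (card (zero_positions L M x)))\<^sup>2)
      = (\<Sum>i\<in>{0..<L}. \<Sum>j\<in>{0..<L}. measure_pmf.prob (bf_inputs N L K) (Z i j))"
    by (simp add: Bochner_Integration.integral_sum integrable_measure_pmf_finite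
        finite_set_pmf_bf_inputs[OF assms(1)])
  also have "\<dots> \<le> (\<Sum>i\<in>{0..<L}. \<Sum>j\<in>{0..<L}. (if i = j then q else q\<^sup>2))"
    unfolding Z_def q_def by (intro sum_mono prob_bf_inputs_avoid_pair_le[OF assms]) auto
  also have "\<dots> \<le> (\<Sum>i\<in>{0..<L}. q + L * q\<^sup>2)"
  proof (rule sum_mono)
    fix i assume "i \<in> {0..<L}"
    have "(\<Sum>j\<in>{0..<L}. (if i = j then q else q\<^sup>2)) \<le> (\<Sum>j\<in>{0..<L}. (if i = j then q else 0) + q\<^sup>2)"
      by (intro sum_mono) auto
    also have "\<dots> = q + L * q\<^sup>2"
      using \<open>i \<in> {0..<L}\<close> by (simp add: sum.distrib)
    finally show "(\<Sum>j\<in>{0..<L}. (if i = j then q else q\<^sup>2)) \<le> q + L * q\<^sup>2" .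
  qed
  also have "\<dots> = L * q + (L * q)\<^sup>2"
    by (simp add: algebra_simps power2_eq_square)
  finally show ?thesis
    by (simp add: q_def)
qed

lemma prob_card_zero_positions_deviation_le:
  assumes "0 < L" "M \<subseteq> {..<N}" "0 < \<epsilon>"
  shows "measure_pmf.prob (bf_inputs N L K)
           {x. \<epsilon> * L \<le> \<bar>real (card (zero_positions L M x)) - L * zero_prob L K M\<bar>}
       \<le> 1 / (\<epsilon>\<^sup>2 * L)"
proof -
  define P where "P = bf_inputs N L K"
  define X where "X x = real (card (zero_positions L M x))" for x
  define q where "q = zero_prob L K M"
  have integrable: "integrable P f" for f :: "_ \<Rightarrow> real"
    unfolding P_def by (rule integrable_measure_pmf_finite[OF finite_set_pmf_bf_inputs[OF assms(1)]])
  have mean: "measure_pmf.expectation P X = L * q"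
    unfolding P_def X_def q_def by (rule expectation_card_zero_positions[OF assms(1,2)])
  have "measure_pmf.variance P X
      = measure_pmf.expectation P (\<lambda>x. (X x)\<^sup>2) - (measure_pmf.expectation P X)\<^sup>2"
    by (rule measure_pmf.variance_eq[OF integrable integrable])
  also have "\<dots> \<le> L * q"
    using expectation_card_zero_positions_squared_le[OF assms(1,2), of K] mean
    by (simp add: P_def X_def q_def)
  also have "\<dots> \<le> L"
    using zero_prob_bounds[OF assms(1)] by (simp add: q_def mult_left_le)
  finally have variance: "measure_pmf.variance P X \<le> L" .
  have "measure_pmf.prob P {x. \<epsilon> * L \<le> \<bar>X x - L * q\<bar>} \<le> measure_pmf.variance P X / (\<epsilon> * L)\<^sup>2"
    using measure_pmf.Chebyshev_inequality[OF _ integrable, of X "\<epsilon> * L"] assms mean by simp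
  also have "\<dots> \<le> L / (\<epsilon> * L)\<^sup>2"
    by (intro divide_right_mono variance) simp
  also have "\<dots> = 1 / (\<epsilon>\<^sup>2 * L)"
    using assms(1) by (simp add: power2_eq_square field_simps)
  finally show ?thesis
    by (simp add: P_def X_def q_def)
qed

section \<open>Binomial coefficients and binary entropy\<close>

definition binary_entropy :: "real \<Rightarrow> real" where
  "binary_entropy p = - p * log 2 p - (1 - p) * log 2 (1 - p)"

lemma binomial_term_Suc:
  fixes p q :: real
  assumes "k < v"
  shows "real (v choose Suc k) * p ^ Suc k * q ^ (v - Suc k) * (real (Suc k) * q)
       = real (v choose k) * p ^ k * q ^ (v - k) * (real (v - k) * p)"
proof -
  have binomial: "real (Suc k) * real (v choose Suc k) = real (v - k) * real (v choose k)"
    using binomial_absorb_comp[of v k] binomial_absorption[of k v] by (metis of_nat_mult)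
  have power: "q ^ (v - k) = q * q ^ (v - Suc k)"
    using assms by (metis Suc_diff_Suc power_Suc)
  have "real (v choose Suc k) * p ^ Suc k * q ^ (v - Suc k) * (real (Suc k) * q)
      = (real (Suc k) * real (v choose Suc k)) * p ^ Suc k * (q * q ^ (v - Suc k))"
    by (simp add: algebra_simps)
  also have "\<dots> = (real (v - k) * real (v choose k)) * p ^ Suc k * q ^ (v - k)"
    by (simp only: binomial power)
  finally show ?thesis
    by (simp add: algebra_simps)
qed

lemma unimodal_le_peak:
  fixes t :: "nat \<Rightarrow> 'a::preorder"
  assumes "\<And>k. k < u \<Longrightarrow> t k \<le> t (Suc k)" "\<And>k. u \<le> k \<Longrightarrow> k < v \<Longrightarrow> t (Suc k) \<le> t k"
    and "k \<le> v"
  shows "t k \<le> t u"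
proof (cases "k \<le> u")
  case True
  then show ?thesis
  proof (induction k rule: inc_induct)
    case (step n)
    have "t n \<le> t (Suc n)"
      using assms(1) step.hyps by simp
    then show ?case
      using step.IH by (rule order.trans)
  qed simp
next
  case False
  then have "u \<le> k"
    by simp
  then show ?thesis
  proof (induction k rule: dec_induct)
    case (step n)
    have "t (Suc n) \<le> t n"
      using assms(2,3) step.hyps by simp
    then show ?case
      using step.IH by (rule order.trans)
  qed simp
qed

lemma binomial_term_le_mode:
  fixes u v k :: nat
  assumes "0 < u" "u < v" "k \<le> v"
  shows "real (v choose k) * (real u / v) ^ k * (real (v - u) / v) ^ (v - k)
       \<le> real (v choose u) * (real u / v) ^ u * (real (v - u) / v) ^ (v - u)"
proof -
  define p q where "p = real u / v" and "q = real (v - u) / v"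
  define t where "t k = real (v choose k) * p ^ k * q ^ (v - k)" for k
  have "0 < p" "0 < q"
    using assms by (simp_all add: p_def q_def)
  have step: "t (Suc k) * (real (Suc k) * q) = t k * (real (v - k) * p)" if "k < v" for k
    unfolding t_def by (rule binomial_term_Suc[OF that])
  have "0 \<le> t k" for k
    using \<open>0 < p\<close> \<open>0 < q\<close> by (simp add: t_def)
  have p_scaled: "real (v - k) * p = real (v - k) * real u / v" for k
    by (simp add: p_def)
  have q_scaled: "real (Suc k) * q = real (v - u) * real (Suc k) / v" for k
    by (simp add: q_def)
  have up: "t (Suc k) \<le> t k" if "u \<le> k" "k < v" for k
  proof -
    have "real (v - k) * real u \<le> real (v - u) * real (Suc k)"
      using that by (intro mult_mono) auto
    then have "real (v - k) * p \<le> real (Suc k) * q"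
      unfolding p_scaled q_scaled by (rule divide_right_mono) simp
    then have "t (Suc k) * (real (Suc k) * q) \<le> t k * (real (Suc k) * q)"
      using step[OF that(2)] \<open>0 \<le> t k\<close> by (simp add: mult_left_mono)
    then show ?thesis
      using \<open>0 < q\<close> by simp
  qed
  have down: "t k \<le> t (Suc k)" if "k < u" for k
  proof -
    have "real (v - u) * real (Suc k) \<le> real (v - k) * real u"
      using that by (intro mult_mono) auto
    then have "real (Suc k) * q \<le> real (v - k) * p"
      unfolding p_scaled q_scaled by (rule divide_right_mono) simp
    then have "t k * (real (Suc k) * q) \<le> t (Suc k) * (real (Suc k) * q)"
      using step[of k] that assms(2) \<open>0 \<le> t k\<close> by (simp add: mult_left_mono)
    then show ?thesis
      using \<open>0 < q\<close> by simp
  qed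
  have "t k \<le> t u"
    using down up assms(3) by (rule unimodal_le_peak)
  then show ?thesis
    by (simp add: t_def p_def q_def)
qed

lemma log_binomial_ge_binary_entropy:
  fixes u v :: nat
  assumes "0 < u" "u < v"
  shows "v * binary_entropy (u / v) - log 2 (real v + 1) \<le> log 2 (real (v choose u))"
proof -
  define p q where "p = real u / v" and "q = real (v - u) / v"
  define t where "t k = real (v choose k) * p ^ k * q ^ (v - k)" for k
  have "0 < p" "0 < q" "p + q = 1"
    using assms by (simp_all add: p_def q_def of_nat_diff field_simps)
  have entropy: "u * log 2 p + (v - u) * log 2 q = - (v * binary_entropy p)"
  proof -
    have "1 - p = q"
      using \<open>p + q = 1\<close> by simp
    then have "v * binary_entropy p = - ((v * p) * log 2 p) - (v * q) * log 2 q"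
      unfolding binary_entropy_def by (simp only:) (simp add: algebra_simps)
    moreover have "real v * p = u" "real v * q = v - u"
      using assms by (simp_all add: p_def q_def)
    ultimately show ?thesis
      by simp
  qed
  have "1 = (p + q) ^ v"
    using \<open>p + q = 1\<close> by simp
  also have "\<dots> = (\<Sum>k\<le>v. t k)"
    by (simp add: binomial_ring t_def)
  also have "\<dots> \<le> (\<Sum>k\<le>v. t u)"
    using binomial_term_le_mode[OF assms] by (intro sum_mono) (simp add: t_def p_def q_def)
  finally have "1 / (real v + 1) \<le> t u"
    by (simp add: field_simps)
  have "0 < real (v choose u)"
    using assms by simp
  then have "0 < t u"
    using \<open>0 < p\<close> \<open>0 < q\<close> by (simp add: t_def)
  with \<open>1 / (real v + 1) \<le> t u\<close> have "log 2 (1 / (real v + 1)) \<le> log 2 (t u)"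
    by simp
  then have "- log 2 (real v + 1) \<le> log 2 (t u)"
    by (simp add: log_divide)
  also have "\<dots> = log 2 (real (v choose u)) + u * log 2 p + (v - u) * log 2 q"
    using \<open>0 < p\<close> \<open>0 < q\<close> \<open>0 < real (v choose u)\<close>
    by (simp add: t_def log_mult log_nat_power)
  also have "\<dots> = log 2 (real (v choose u)) - v * binary_entropy p"
    using entropy by simp
  finally show ?thesis
    by (simp add: p_def)
qed

lemma binary_entropy_lower_bound:
  assumes "0 < \<beta>" "\<beta> \<le> 1"
  shows "\<beta> \<le> 2 powr (\<beta> - 1) * binary_entropy ((1 / 2) / 2 powr (\<beta> - 1))"
proof -
  define s where "s = (2::real) powr \<beta>"
  define t where "t = s - 1"
  have "1 < s" "s \<le> 2"
    using assms powr_mono[of \<beta> 1 "2::real"] by (simp_all add: s_def)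
  then have "0 < t" "t \<le> 1"
    by (simp_all add: t_def)
  have "(1 - t) * ln s = (1 - t) * ln (1 + t)"
    by (simp add: t_def)
  also have "\<dots> \<le> (1 - t) * t"
    using \<open>0 < t\<close> \<open>t \<le> 1\<close> ln_add_one_self_le_self[of t] by (intro mult_left_mono) auto
  also have "\<dots> \<le> t * (- ln t)"
  proof -
    have "1 - t \<le> - ln t"
      using \<open>0 < t\<close> ln_le_minus_one[of t] by simp
    then have "t * (1 - t) \<le> t * (- ln t)"
      using \<open>0 < t\<close> by (intro mult_left_mono) simp_all
    then show ?thesis
      by (simp add: mult.commute)
  qed
  finally have "ln s \<le> t * (ln s - ln t)"
    by (simp add: algebra_simps)
  then have "log 2 s \<le> t * (log 2 s - log 2 t)"
    by (simp add: log_def field_simps)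
  moreover have "2 powr (\<beta> - 1) * binary_entropy ((1 / 2) / 2 powr (\<beta> - 1))
      = (1 / 2) * log 2 s + (t / 2) * (log 2 s - log 2 t)"
    using \<open>1 < s\<close> \<open>0 < t\<close>
    by (simp add: binary_entropy_def powr_diff s_def[symmetric] t_def log_divide field_simps)
  moreover have "log 2 s = \<beta>"
    by (simp add: s_def)
  ultimately show ?thesis
    by simp
qed

lemma scaled_binary_entropy_near:
  assumes "0 < b0" "b0 < a0" "c < a0 * binary_entropy (b0 / a0)"
  obtains d where "0 < d"
    "\<And>a b. \<bar>a - a0\<bar> < d \<Longrightarrow> \<bar>b - b0\<bar> < d \<Longrightarrow> 0 < b \<and> b < a \<and> c < a * binary_entropy (b / a)"
proof -
  define F where "F z = fst z * binary_entropy (snd z / fst z)" for z :: "real \<times> real"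
  have "isCont F (a0, b0)"
    using assms unfolding F_def binary_entropy_def by (intro continuous_intros) (auto simp: field_simps)
  moreover have "c < F (a0, b0)"
    using assms(3) by (simp add: F_def)
  ultimately have "\<forall>\<^sub>F z in nhds (a0, b0). c < F z"
    by (intro order_tendstoD(1)) (auto simp: isCont_def tendsto_at_iff_tendsto_nhds)
  moreover have "((\<lambda>z. z) \<longlongrightarrow> (a0, b0)) (nhds (a0, b0))"
    by (rule filterlim_ident)
  then have "((\<lambda>z. snd z) \<longlongrightarrow> b0) (nhds (a0, b0))"
    and "((\<lambda>z. fst z - snd z) \<longlongrightarrow> a0 - b0) (nhds (a0, b0))"
    by (auto intro!: tendsto_eq_intros)
  then have "\<forall>\<^sub>F z in nhds (a0, b0). 0 < snd z \<and> 0 < fst z - snd z"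
    using assms by (intro eventually_conj) (auto dest!: order_tendstoD(1)[where a = 0])
  ultimately have "\<forall>\<^sub>F z in nhds (a0, b0). 0 < snd z \<and> snd z < fst z \<and> c < F z"
    by eventually_elim simp
  then obtain d where "0 < d"
    and d: "\<And>z. dist z (a0, b0) < d \<Longrightarrow> 0 < snd z \<and> snd z < fst z \<and> c < F z"
    unfolding eventually_nhds_metric by blast
  show thesis
  proof (rule that[of "d / 2"])
    fix a b assume "\<bar>a - a0\<bar> < d / 2" "\<bar>b - b0\<bar> < d / 2"
    then have "dist (a, b) (a0, b0) < d"
      using sqrt_sum_squares_le_sum_abs[of "a - a0" "b - b0"]
      by (simp add: dist_Pair_Pair dist_real_def)
    then show "0 < b \<and> b < a \<and> c < a * binary_entropy (b / a)"
      using d[of "(a, b)"] by (simp add: F_def)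
  qed (use \<open>0 < d\<close> in simp)
qed

section \<open>Asymptotics\<close>

lemma tendsto_power_one_minus_inverse:
  assumes "((\<lambda>L. real (k L) / real L) \<longlongrightarrow> c) sequentially"
  shows "((\<lambda>L. ((real L - 1) / L) ^ k L) \<longlongrightarrow> exp (- c)) sequentially"
proof -
  have "((\<lambda>L::nat. real L * ln ((real L - 1) / L)) \<longlongrightarrow> -1) sequentially"
    by real_asymp
  then have "((\<lambda>L. exp (real (k L) / real L * (real L * ln ((real L - 1) / L))))
      \<longlongrightarrow> exp (c * -1)) sequentially"
    by (intro tendsto_intros assms)
  moreover have "\<forall>\<^sub>F L in sequentially.
      exp (real (k L) / real L * (real L * ln ((real L - 1) / L))) = ((real L - 1) / L) ^ k L"
    using eventually_ge_at_top[of "2::nat"]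
  proof eventually_elim
    case (elim L)
    then have "0 < (real L - 1) / L"
      by simp
    with elim show ?case
      by (simp add: exp_of_nat_mult)
  qed
  ultimately show ?thesis
    by (simp add: tendsto_cong)
qed

lemma tendsto_zero_prob:
  assumes "finite M" "\<And>n. n \<in> M \<Longrightarrow> ((\<lambda>L. real (K n L) / real L) \<longlongrightarrow> \<kappa> n) sequentially"
  shows "((\<lambda>L. zero_prob L K M) \<longlongrightarrow> exp (- (\<Sum>n\<in>M. \<kappa> n))) sequentially"
proof -
  have "((\<lambda>L. zero_prob L K M) \<longlongrightarrow> (\<Prod>n\<in>M. exp (- \<kappa> n))) sequentially"
    unfolding zero_prob_def by (intro tendsto_prod tendsto_power_one_minus_inverse assms(2))
  then show ?thesis
    using assms(1) by (simp add: exp_sum[symmetric] sum_negf)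
qed

lemma expectation_ge_mult_prob:
  fixes f :: "'a \<Rightarrow> real"
  assumes "integrable (measure_pmf P) f" "\<And>x. 0 \<le> f x" "\<And>x. x \<in> G \<Longrightarrow> c \<le> f x" "0 \<le> c"
  shows "c * measure_pmf.prob P G \<le> measure_pmf.expectation P f"
proof -
  have "c * measure_pmf.prob P G = measure_pmf.expectation P (\<lambda>x. c * indicator G x)"
    by simp
  also have "\<dots> \<le> measure_pmf.expectation P f"
  proof (rule integral_mono[OF _ assms(1)])
    show "integrable P (\<lambda>x. c * indicator G x)"
      using assms(4) by (intro measure_pmf.integrable_const_bound[where B = c]) (auto simp: indicator_def)
  qed (use assms in \<open>auto simp: indicator_def\<close>)
  finally show ?thesis .
qed

lemma prob_zero_positions_typical_ge:
  assumes "0 < L" "M \<subseteq> {..<N}" "M' \<subseteq> {..<N}" "0 < \<epsilon>"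
  shows "1 - 2 / (\<epsilon>\<^sup>2 * L) \<le> measure_pmf.prob (bf_inputs N L K)
           {x. \<bar>real (card (zero_positions L M x)) - L * zero_prob L K M\<bar> < \<epsilon> * L
             \<and> \<bar>real (card (zero_positions L M' x)) - L * zero_prob L K M'\<bar> < \<epsilon> * L}"
proof -
  define P where "P = bf_inputs N L K"
  define dev where "dev M = {x. \<epsilon> * L \<le> \<bar>real (card (zero_positions L M x)) - L * zero_prob L K M\<bar>}"
    for M
  have "measure_pmf.prob P (dev M \<union> dev M') \<le> measure_pmf.prob P (dev M) + measure_pmf.prob P (dev M')"
    by (rule measure_Un_le) simp_all
  also have "\<dots> \<le> 1 / (\<epsilon>\<^sup>2 * L) + 1 / (\<epsilon>\<^sup>2 * L)"
    unfolding P_def dev_def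
    by (intro add_mono prob_card_zero_positions_deviation_le[OF assms(1) _ assms(4)] assms(2,3))
  finally have "measure_pmf.prob P (dev M \<union> dev M') \<le> 2 / (\<epsilon>\<^sup>2 * L)"
    by (simp add: ac_simps)
  moreover have "UNIV - (dev M \<union> dev M')
      = {x. \<bar>real (card (zero_positions L M x)) - L * zero_prob L K M\<bar> < \<epsilon> * L
          \<and> \<bar>real (card (zero_positions L M' x)) - L * zero_prob L K M'\<bar> < \<epsilon> * L}"
    by (auto simp: dev_def not_le)
  ultimately show ?thesis
    using measure_pmf.prob_compl[of "dev M \<union> dev M'" P] by (simp add: P_def)
qed

lemma cond_mutual_info_bf_inputs_ge_typical:
  assumes "0 < L" "S \<subseteq> {..<N}" "0 < \<epsilon>" "log 2 (real L + 1) \<le> L * c"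
    and typical: "\<And>a b. \<bar>a - zero_prob L K ({..<N} - S)\<bar> < \<epsilon> \<Longrightarrow>
                   \<bar>b - zero_prob L K {..<N}\<bar> < \<epsilon> \<Longrightarrow> 0 < b \<and> b < a \<and> c \<le> a * binary_entropy (b / a)"
  shows "(L * c - log 2 (real L + 1)) * (1 - 2 / (\<epsilon>\<^sup>2 * L))
       \<le> cond_mutual_info (bf_inputs N L K) (\<lambda>x. restrict x S) (\<lambda>x. or_output N x)
           (\<lambda>x. restrict x ({..<N} - S))"
proof -
  define P where "P = bf_inputs N L K"
  define V where "V x = card (zero_positions L ({..<N} - S) x)" for x
  define U where "U x = card (zero_positions L {..<N} x)" for x
  define G where "G = {x. \<bar>real (V x) - L * zero_prob L K ({..<N} - S)\<bar> < \<epsilon> * L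
                        \<and> \<bar>real (U x) - L * zero_prob L K {..<N}\<bar> < \<epsilon> * L}"
  have prob_G: "1 - 2 / (\<epsilon>\<^sup>2 * L) \<le> measure_pmf.prob P G"
    unfolding P_def G_def V_def U_def
    by (rule prob_zero_positions_typical_ge[OF assms(1) _ _ assms(3)]) (use assms(2) in auto)
  have typical_bound: "L * c - log 2 (real L + 1) \<le> log 2 (real (V x choose U x))" if "x \<in> G" for x
  proof -
    have rescale: "\<bar>real m / L - q\<bar> < \<epsilon>" if "\<bar>real m - L * q\<bar> < \<epsilon> * L" for m and q :: real
      using that assms(1) by (simp add: abs_less_iff field_simps)
    have dev_V: "\<bar>real (V x) - L * zero_prob L K ({..<N} - S)\<bar> < \<epsilon> * L"
      and dev_U: "\<bar>real (U x) - L * zero_prob L K {..<N}\<bar> < \<epsilon> * L"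
      using that by (simp_all add: G_def)
    from rescale[OF dev_V] rescale[OF dev_U]
    have "0 < U x / L" "U x / L < V x / L" "c \<le> V x / L * binary_entropy ((U x / L) / (V x / L))"
      using typical by blast+
    then have "0 < U x" "U x < V x" "L * c \<le> V x * binary_entropy (U x / V x)"
      using assms(1) by (simp_all add: divide_less_cancel field_simps)
    moreover have "log 2 (real (V x) + 1) \<le> log 2 (real L + 1)"
      using card_zero_positions_le by (simp add: V_def)
    ultimately show ?thesis
      using log_binomial_ge_binary_entropy[of "U x" "V x"] by linarith
  qed
  have nonneg: "0 \<le> log 2 (real (V x choose U x))" for x
  proof -
    have "U x \<le> V x"
      unfolding U_def V_def by (intro card_mono zero_positions_antimono) (auto simp: zero_positions_def)
    then show ?thesis
      by (simp add: Suc_le_eq)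
  qed
  have "0 \<le> L * c - log 2 (real L + 1)"
    using assms(4) by linarith
  then have "(L * c - log 2 (real L + 1)) * (1 - 2 / (\<epsilon>\<^sup>2 * L))
      \<le> (L * c - log 2 (real L + 1)) * measure_pmf.prob P G"
    by (rule mult_left_mono[OF prob_G])
  also have "\<dots> \<le> measure_pmf.expectation P (\<lambda>x. log 2 (real (V x choose U x)))"
    using finite_set_pmf_bf_inputs[OF assms(1)] typical_bound nonneg \<open>0 \<le> L * c - log 2 (real L + 1)\<close>
    by (intro expectation_ge_mult_prob) (simp_all add: P_def integrable_measure_pmf_finite)
  also have "\<dots> \<le> cond_mutual_info P (\<lambda>x. restrict x S) (\<lambda>x. or_output N x) (\<lambda>x. restrict x ({..<N} - S))"
    unfolding P_def V_def U_def by (rule cond_mutual_info_bf_inputs_ge[OF assms(1,2)])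
  finally show ?thesis
    by (simp add: P_def)
qed

lemma liminf_cond_mutual_info_bf_inputs_ge:
  assumes S: "S \<subseteq> {..<N}"
    and lim_S: "((\<lambda>L. zero_prob L K ({..<N} - S)) \<longlongrightarrow> a0) sequentially"
    and lim_N: "((\<lambda>L. zero_prob L K {..<N}) \<longlongrightarrow> b0) sequentially"
    and "0 < b0" "b0 < a0" "0 < c" "c < a0 * binary_entropy (b0 / a0)"
  shows "ereal c \<le> liminf (\<lambda>L. ereal (cond_mutual_info (bf_inputs N L K) (\<lambda>x. restrict x S)
                            (\<lambda>x. or_output N x) (\<lambda>x. restrict x ({..<N} - S)) / real L))"
proof -
  define I where "I L = cond_mutual_info (bf_inputs N L K) (\<lambda>x. restrict x S) (\<lambda>x. or_output N x)
                          (\<lambda>x. restrict x ({..<N} - S))" for L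
  obtain d where "0 < d"
    and near: "\<And>a b. \<bar>a - a0\<bar> < d \<Longrightarrow> \<bar>b - b0\<bar> < d \<Longrightarrow> 0 < b \<and> b < a \<and> c < a * binary_entropy (b / a)"
    using scaled_binary_entropy_near[OF assms(4,5,7)] by blast
  define \<epsilon> where "\<epsilon> = d / 2"
  have "0 < \<epsilon>"
    using \<open>0 < d\<close> by (simp add: \<epsilon>_def)
  define g where "g L = (c - log 2 (real L + 1) / L) * (1 - 2 / (\<epsilon>\<^sup>2 * L))" for L :: nat
  have log_lim: "((\<lambda>L::nat. log 2 (real L + 1) / L) \<longlongrightarrow> 0) sequentially"
    by real_asymp
  moreover have "((\<lambda>L::nat. 2 / (\<epsilon>\<^sup>2 * L)) \<longlongrightarrow> 0) sequentially"
    using lim_const_over_n[of "2 / \<epsilon>\<^sup>2"] by simp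
  ultimately have "(g \<longlongrightarrow> (c - 0) * (1 - 0)) sequentially"
    unfolding g_def by (intro tendsto_intros)
  then have "liminf (\<lambda>L. ereal (g L)) = ereal c"
    by (intro lim_imp_Liminf tendsto_ereal) simp_all
  moreover have "\<forall>\<^sub>F L in sequentially. g L \<le> I L / L"
    using eventually_gt_at_top[of 0] tendstoD[OF lim_S \<open>0 < \<epsilon>\<close>] tendstoD[OF lim_N \<open>0 < \<epsilon>\<close>]
      order_tendstoD(2)[OF log_lim \<open>0 < c\<close>]
  proof eventually_elim
    case (elim L)
    then have "log 2 (real L + 1) \<le> L * c"
      by (simp add: field_simps)
    moreover have "0 < b \<and> b < a \<and> c \<le> a * binary_entropy (b / a)"
      if "\<bar>a - zero_prob L K ({..<N} - S)\<bar> < \<epsilon>" "\<bar>b - zero_prob L K {..<N}\<bar> < \<epsilon>" for a b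
    proof -
      have "\<bar>a - a0\<bar> < d" "\<bar>b - b0\<bar> < d"
        using that elim abs_triangle_ineq[of "a - zero_prob L K ({..<N} - S)" "zero_prob L K ({..<N} - S) - a0"]
          abs_triangle_ineq[of "b - zero_prob L K {..<N}" "zero_prob L K {..<N} - b0"]
        by (simp_all add: \<epsilon>_def dist_real_def)
      then show ?thesis
        using near[of a b] by simp
    qed
    ultimately have "(L * c - log 2 (real L + 1)) * (1 - 2 / (\<epsilon>\<^sup>2 * L)) \<le> I L"
      unfolding I_def using elim(1) by (intro cond_mutual_info_bf_inputs_ge_typical[OF _ S \<open>0 < \<epsilon>\<close>])
    moreover have "g L = (L * c - log 2 (real L + 1)) * (1 - 2 / (\<epsilon>\<^sup>2 * L)) / L"
      using elim(1) by (simp add: g_def field_simps)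
    ultimately show ?case
      by (simp add: divide_right_mono)
  qed
  then have "liminf (\<lambda>L. ereal (g L)) \<le> liminf (\<lambda>L. ereal (I L / L))"
    by (intro Liminf_mono) (simp add: eventually_mono)
  ultimately show ?thesis
    by (simp add: I_def)
qed

lemma liminf_cond_mutual_info_bf_inputs_gt:
  fixes \<kappa> :: "nat \<Rightarrow> real" and r :: real
  assumes S: "S \<subseteq> {..<N}"
    and lim: "\<forall>n<N. ((\<lambda>L. real (K n L) / real L) \<longlongrightarrow> \<kappa> n) sequentially"
    and nonneg: "\<forall>n<N. 0 \<le> \<kappa> n" and total: "(\<Sum>n<N. \<kappa> n) = ln 2"
    and r: "0 \<le> r" "r < (\<Sum>n\<in>S. \<kappa> n) / ln 2"
  shows "ereal r < liminf (\<lambda>L. ereal (cond_mutual_info (bf_inputs N L K) (\<lambda>x. restrict x S)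
                            (\<lambda>x. or_output N x) (\<lambda>x. restrict x ({..<N} - S)) / real L))"
proof -
  define \<beta> where "\<beta> = (\<Sum>n\<in>S. \<kappa> n) / ln 2"
  define \<alpha> where "\<alpha> = 2 powr (\<beta> - 1)"
  have "r < \<beta>"
    using r by (simp add: \<beta>_def)
  have "(\<Sum>n\<in>S. \<kappa> n) \<le> (\<Sum>n<N. \<kappa> n)"
    by (rule sum_mono2) (use S nonneg in auto)
  then have "0 < \<beta>" "\<beta> \<le> 1"
    using r total by (simp_all add: \<beta>_def)
  then have "\<beta> \<le> \<alpha> * binary_entropy ((1 / 2) / \<alpha>)"
    unfolding \<alpha>_def by (rule binary_entropy_lower_bound)
  have "1 / 2 < \<alpha>"
    using powr_less_mono[of "-1" "\<beta> - 1" "2::real"] \<open>0 < \<beta>\<close> by (simp add: \<alpha>_def powr_minus)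
  have "(\<Sum>n\<in>{..<N} - S. \<kappa> n) = ln 2 * (1 - \<beta>)"
    using S total by (simp add: sum_diff \<beta>_def algebra_simps)
  then have "exp (- (\<Sum>n\<in>{..<N} - S. \<kappa> n)) = \<alpha>"
    by (simp add: \<alpha>_def powr_def algebra_simps)
  moreover have "((\<lambda>L. zero_prob L K ({..<N} - S)) \<longlongrightarrow> exp (- (\<Sum>n\<in>{..<N} - S. \<kappa> n))) sequentially"
    by (rule tendsto_zero_prob) (use lim in auto)
  ultimately have lim_S: "((\<lambda>L. zero_prob L K ({..<N} - S)) \<longlongrightarrow> \<alpha>) sequentially"
    by simp
  have "((\<lambda>L. zero_prob L K {..<N}) \<longlongrightarrow> exp (- (\<Sum>n<N. \<kappa> n))) sequentially"
    by (rule tendsto_zero_prob) (use lim in auto)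
  then have lim_N: "((\<lambda>L. zero_prob L K {..<N}) \<longlongrightarrow> 1 / 2) sequentially"
    by (simp add: total exp_minus)
  have "ereal r < ereal ((r + \<beta>) / 2)"
    using \<open>r < \<beta>\<close> by simp
  also have "\<dots> \<le> liminf (\<lambda>L. ereal (cond_mutual_info (bf_inputs N L K) (\<lambda>x. restrict x S)
                            (\<lambda>x. or_output N x) (\<lambda>x. restrict x ({..<N} - S)) / real L))"
    using \<open>0 < \<beta>\<close> \<open>r < \<beta>\<close> r(1) \<open>1 / 2 < \<alpha>\<close> \<open>\<beta> \<le> \<alpha> * binary_entropy ((1 / 2) / \<alpha>)\<close>
    by (intro liminf_cond_mutual_info_bf_inputs_ge[OF S lim_S lim_N]) simp_all
  finally show ?thesis .
qed

theorem proposition1: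
  fixes N :: nat and R :: "nat \<Rightarrow> real"
  assumes "N \<ge> 1"
    and "\<forall>n<N. R n \<ge> 0"
    and "(\<Sum>n<N. R n) < 1"
  shows "\<exists>\<kappa> :: nat \<Rightarrow> real. (\<forall>n<N. \<kappa> n > 0) \<and>
    (\<forall>K :: nat \<Rightarrow> nat \<Rightarrow> nat.
       (\<forall>n<N. \<forall>L\<ge>1. K n L > 0) \<longrightarrow>
       (\<forall>n<N. ((\<lambda>L. real (K n L) / real L) \<longlongrightarrow> \<kappa> n) sequentially) \<longrightarrow>
       (\<forall>S. S \<noteq> {} \<and> S \<subseteq> {..<N} \<longrightarrow>
          ereal (\<Sum>n\<in>S. R n) <
          liminf (\<lambda>L. ereal (cond_mutual_info (bf_inputs N L K)
                               (\<lambda>x. restrict x S)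
                               (\<lambda>x. or_output N x)
                               (\<lambda>x. restrict x ({..<N} - S)) / real L))))"
proof -
  define \<delta> where "\<delta> = (1 - (\<Sum>n<N. R n)) / N"
  have "0 < \<delta>"
    using assms by (simp add: \<delta>_def)
  define \<kappa> where "\<kappa> n = ln 2 * (R n + \<delta>)" for n
  have \<kappa>_pos: "\<forall>n<N. 0 < \<kappa> n"
    using assms(2) \<open>0 < \<delta>\<close> by (simp add: \<kappa>_def add_nonneg_pos)
  have "(\<Sum>n<N. R n + \<delta>) = 1"
    using assms(1) by (simp add: sum.distrib \<delta>_def)
  then have total: "(\<Sum>n<N. \<kappa> n) = ln 2"
    by (simp add: \<kappa>_def sum_distrib_left[symmetric])
  show ?thesis
  proof (intro exI[of _ \<kappa>] conjI allI impI)
    fix K :: "nat \<Rightarrow> nat \<Rightarrow> nat" and S :: "nat set"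
    assume lim: "\<forall>n<N. ((\<lambda>L. real (K n L) / real L) \<longlongrightarrow> \<kappa> n) sequentially"
      and S: "S \<noteq> {} \<and> S \<subseteq> {..<N}"
    then have "finite S"
      using finite_subset by blast
    have "(\<Sum>n\<in>S. \<kappa> n) / ln 2 = (\<Sum>n\<in>S. R n) + card S * \<delta>"
      by (simp add: \<kappa>_def sum.distrib sum_distrib_left[symmetric])
    moreover have "0 < card S * \<delta>"
      using S \<open>finite S\<close> \<open>0 < \<delta>\<close> by (simp add: card_gt_0_iff)
    ultimately have "(\<Sum>n\<in>S. R n) < (\<Sum>n\<in>S. \<kappa> n) / ln 2"
      by simp
    moreover have "0 \<le> (\<Sum>n\<in>S. R n)"
      using S assms(2) by (intro sum_nonneg) auto
    ultimately show "ereal (\<Sum>n\<in>S. R n) < liminf (\<lambda>L. ereal (cond_mutual_info (bf_inputs N L K)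
        (\<lambda>x. restrict x S) (\<lambda>x. or_output N x) (\<lambda>x. restrict x ({..<N} - S)) / real L))"
      using liminf_cond_mutual_info_bf_inputs_gt[OF _ lim _ total] S \<kappa>_pos by (simp add: less_imp_le)
  qed (use \<kappa>_pos in simp)
qed

end
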